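(* Let $a<b$ with $[a,b]\subset[0,\infty)$, let $f,g:[a,b]\to\mathbb{R}$ be integrable with $0\le g(t)\le1$ for all $t\in[a,b]$ and such that $\int_a^b g(t)f'(t)\,dt$ exists. Suppose $f$ is absolutely continuous on $[a,b]$ and $|f'|$ is $s$-convex on $[a,b]$ for some fixed $s\in(0,1]$. Let $\lambda:=\int_a^b g(t)\,dt$. Then $$\left|\int_a^{a+\lambda} f(t)\,dt-\int_a^b f(t)g(t)\,dt\right|\le\frac{1}{(s+1)(s+2)}\left[\lambda^2|f'(a)|+(b-a-\lambda)^2|f'(b)|\right]+\frac{1}{s+2}\left[\lambda^2+(b-a-\lambda)^2\right]|f'(a+\lambda)|,$$ and $$\left|\int_a^b f(t)g(t)\,dt-\int_{b-\lambda}^b f(t)\,dt\right|\le\frac{1}{(s+1)(s+2)}\left[\lambda^2|f'(b)|+(b-a-\lambda)^2|f'(a)|\right]+\frac{1}{s+2}\left[\lambda^2+(b-a-\lambda)^2\right]|f'(b-\lambda)|.$$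
   Context: For fixed $s\in(0,1]$, a function $h:I\to\mathbb{R}$ on an interval $I\subset[0,\infty)$ is $s$-convex (in the second sense) if $h(\alpha x+\beta y)\le\alpha^s h(x)+\beta^s h(y)$ for all $x,y\in I$ and all $\alpha,\beta\ge0$ with $\alpha+\beta=1$. *)

theory Defs
  imports "HOL-Analysis.Analysis"
begin

definition s_convex_on :: "real \<Rightarrow> real set \<Rightarrow> (real \<Rightarrow> real) \<Rightarrow> bool" where
  "s_convex_on s I h \<longleftrightarrow>
     (\<forall>x\<in>I. \<forall>y\<in>I. \<forall>\<alpha> \<beta>. \<alpha> \<ge> 0 \<longrightarrow> \<beta> \<ge> 0 \<longrightarrow> \<alpha> + \<beta> = 1 \<longrightarrow>
        h (\<alpha> * x + \<beta> * y) \<le> \<alpha> powr s * h x + \<beta> powr s * h y)"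

definition abs_continuous_on :: "real set \<Rightarrow> (real \<Rightarrow> real) \<Rightarrow> bool" where
  "abs_continuous_on S f \<longleftrightarrow>
     (\<forall>\<epsilon>>0. \<exists>\<delta>>0. \<forall>(n::nat) (u::nat \<Rightarrow> real) (v::nat \<Rightarrow> real).
        (\<forall>i<n. u i \<le> v i \<and> {u i..v i} \<subseteq> S) \<and>
        disjoint_family_on (\<lambda>i. {u i<..<v i}) {..<n} \<and>
        (\<Sum>i<n. v i - u i) < \<delta>
        \<longrightarrow> (\<Sum>i<n. \<bar>f (v i) - f (u i)\<bar>) < \<epsilon>)"

end

(*
  Put c = a + lam.  Since the integral of g is c - a, the difference
  int_a^c f - int_a^b f g equals int_a^b (f t - f c) (chi_[a,c] t - g t) dt, and the weight
  chi_[a,c] - g has modulus at most 1; so the left-hand side is bounded by int_a^b |f t - f c|.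
  On [a,c] and on [c,b] one has |f t - f c| <= |int_t^c |f'||, and s-convexity bounds |f'| on
  each piece by the power interpolant ((q-u)/(q-p))^s |f'(p)| + ((u-p)/(q-p))^s |f'(q)|, whose
  double integral produces the constants 1/((s+1)(s+2)) and 1/(s+2).  The second inequality is
  the first one applied to the weight 1 - g.

  The estimate |f y - f x| <= int_x^y |f'| for the absolutely continuous f comes from the
  Luzin N property: f maps null sets to null sets, so the interval between f x and f y is
  covered, up to a null set, by the image of the points of differentiability, whose measure is at
  most int |f'|.  That |f'| is integrable at all follows from the bound |f'| <= |f'(a)| + |f'(b)|
  given by s-convexity.
*)

theory Submission
  imports Defs
begin

section \<open>Absolute continuity and the Luzin N property\<close>

lemma abs_continuous_on_subset:
  assumes "abs_continuous_on S f" "T \<subseteq> S"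
  shows "abs_continuous_on T f"
  using assms unfolding abs_continuous_on_def by (smt (verit) subset_trans)

lemma abs_continuous_onD:
  assumes "abs_continuous_on S f" "0 < e"
  obtains d where "0 < d"
    and "\<And>I u v. finite I \<Longrightarrow> (\<And>i. i \<in> I \<Longrightarrow> u i \<le> v i \<and> {u i..v i} \<subseteq> S) \<Longrightarrow>
           disjoint_family_on (\<lambda>i. {u i<..<v i}) I \<Longrightarrow> (\<Sum>i\<in>I. v i - u i) < d \<Longrightarrow>
           (\<Sum>i\<in>I. \<bar>f (v i) - f (u i)\<bar>) < e"
proof -
  obtain d where "0 < d" and d: "\<And>(n::nat) u v.
      (\<forall>i<n. u i \<le> v i \<and> {u i..v i} \<subseteq> S) \<and> disjoint_family_on (\<lambda>i. {u i<..<v i}) {..<n} \<and>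
      (\<Sum>i<n. v i - u i) < d \<Longrightarrow> (\<Sum>i<n. \<bar>f (v i) - f (u i)\<bar>) < e"
    using assms unfolding abs_continuous_on_def by meson
  show thesis
  proof (rule that[OF \<open>0 < d\<close>])
    fix I :: "'i set" and u v :: "'i \<Rightarrow> real"
    assume "finite I" and uv: "\<And>i. i \<in> I \<Longrightarrow> u i \<le> v i \<and> {u i..v i} \<subseteq> S"
      and disj: "disjoint_family_on (\<lambda>i. {u i<..<v i}) I" and small: "(\<Sum>i\<in>I. v i - u i) < d"
    obtain h where h: "bij_betw h {..<card I} I"
      using ex_bij_betw_nat_finite[OF \<open>finite I\<close>] atLeast0LessThan by metis
    have reindex: "(\<Sum>i<card I. w (h i)) = (\<Sum>i\<in>I. w i)" for w :: "'i \<Rightarrow> real"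
      using sum.reindex_bij_betw[OF h] .
    have "(\<Sum>i<card I. \<bar>f (v (h i)) - f (u (h i))\<bar>) < e"
    proof (rule d, intro conjI allI impI)
      show "u (h i) \<le> v (h i)" "{u (h i)..v (h i)} \<subseteq> S" if "i < card I" for i
        using uv[of "h i"] h that by (auto dest: bij_betwE)
      show "disjoint_family_on (\<lambda>i. {u (h i)<..<v (h i)}) {..<card I}"
        using disj h unfolding disjoint_family_on_def bij_betw_def inj_on_def by blast
      show "(\<Sum>i<card I. v (h i) - u (h i)) < d"
        using small reindex[of "\<lambda>i. v i - u i"] by simp
    qed
    then show "(\<Sum>i\<in>I. \<bar>f (v i) - f (u i)\<bar>) < e"
      using reindex[of "\<lambda>i. \<bar>f (v i) - f (u i)\<bar>"] by simp
  qed
qed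

lemma abs_continuous_on_imp_continuous_on:
  assumes "abs_continuous_on S f" "is_interval S"
  shows "continuous_on S f"
  unfolding continuous_on_iff
proof (intro ballI allI impI)
  fix x e :: real assume "x \<in> S" "0 < e"
  obtain d where "0 < d" and d: "\<And>I u v. finite I \<Longrightarrow>
      (\<And>i::unit. i \<in> I \<Longrightarrow> u i \<le> v i \<and> {u i..v i} \<subseteq> S) \<Longrightarrow>
      disjoint_family_on (\<lambda>i. {u i<..<v i}) I \<Longrightarrow> (\<Sum>i\<in>I. v i - u i) < d \<Longrightarrow>
      (\<Sum>i\<in>I. \<bar>f (v i) - f (u i)\<bar>) < e"
    using abs_continuous_onD[OF assms(1) \<open>0 < e\<close>] by blast
  show "\<exists>d>0. \<forall>y\<in>S. dist y x < d \<longrightarrow> dist (f y) (f x) < e"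
  proof (intro exI[of _ d] conjI ballI impI \<open>0 < d\<close>)
    fix y assume "y \<in> S" "dist y x < d"
    have "{min x y..max x y} \<subseteq> S"
      using closed_segment_subset[of x S y] \<open>x \<in> S\<close> \<open>y \<in> S\<close> \<open>is_interval S\<close>
      by (simp add: is_interval_convex_1 closed_segment_eq_real_ivl min_def max_def split: if_splits)
    moreover have "max x y - min x y < d"
      using \<open>dist y x < d\<close> by (simp add: dist_real_def)
    ultimately have "\<bar>f (max x y) - f (min x y)\<bar> < e"
      using d[of "{()}" "\<lambda>_. min x y" "\<lambda>_. max x y"]
      by (simp add: disjoint_family_on_def)
    then show "dist (f y) (f x) < e"
      by (simp add: dist_real_def min_def max_def abs_minus_commute split: if_splits)
  qed
qed

lemma negligible_imp_open_superset:
  assumes "negligible S" "0 < e"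
  obtains T where "open T" "S \<subseteq> T" "T \<in> lmeasurable" "measure lebesgue T < e"
proof -
  have S: "S \<in> lmeasurable" "S \<in> null_sets lebesgue"
    using assms(1) negligible_imp_measurable negligible_iff_null_sets by auto
  obtain T where "open T" "S \<subseteq> T" and TS: "T - S \<in> lmeasurable" "emeasure lebesgue (T - S) < ennreal e"
    using sets_lebesgue_outer_open[OF fmeasurableD[OF S(1)] assms(2)] by blast
  have "T = (T - S) \<union> S"
    using \<open>S \<subseteq> T\<close> by blast
  then have "T \<in> lmeasurable"
    using TS(1) S(1) fmeasurable.Un by metis
  moreover have "measure lebesgue T = measure lebesgue (T - S)"
    using S(2) \<open>open T\<close> by (simp add: measure_Diff_null_set borel_open)
  moreover have "measure lebesgue (T - S) < e"
    using TS by (simp add: emeasure_eq_measure2 ennreal_less_iff)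
  ultimately show thesis
    using that \<open>open T\<close> \<open>S \<subseteq> T\<close> by simp
qed

lemma components_bounded_open_real:
  fixes V :: "real set"
  assumes "open V" "bounded V" "C \<in> components V"
  obtains \<alpha> \<beta> where "\<alpha> < \<beta>" "C = {\<alpha><..<\<beta>}"
proof -
  have "open C" "C \<noteq> {}" "is_interval C"
    using assms open_components in_components_nonempty in_components_connected is_interval_connected_1
    by blast+
  have "bdd_above C" "bdd_below C"
    using assms bounded_subset in_components_subset bounded_imp_bdd_above bounded_imp_bdd_below
    by metis+
  have "C = {Inf C<..<Sup C}"
  proof (intro equalityI subsetI)
    fix x assume "x \<in> C"
    obtain r where "0 < r" "ball x r \<subseteq> C"
      using \<open>open C\<close> \<open>x \<in> C\<close> open_contains_ball by blast
    then have "x - r/2 \<in> C" "x + r/2 \<in> C"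
      by (auto simp: dist_real_def subset_iff)
    then show "x \<in> {Inf C<..<Sup C}"
      using \<open>0 < r\<close> cInf_lower[OF _ \<open>bdd_below C\<close>] cSup_upper[OF _ \<open>bdd_above C\<close>]
      by fastforce
  next
    fix x assume x: "x \<in> {Inf C<..<Sup C}"
    obtain y z where "y \<in> C" "y < x" "z \<in> C" "x < z"
      using x cInf_less_iff[OF \<open>C \<noteq> {}\<close> \<open>bdd_below C\<close>] less_cSup_iff[OF \<open>C \<noteq> {}\<close> \<open>bdd_above C\<close>]
      by auto
    then show "x \<in> C"
      using \<open>is_interval C\<close> unfolding is_interval_1 by (meson less_imp_le)
  qed
  moreover have "Inf C < Sup C"
    using \<open>C \<noteq> {}\<close> calculation by (metis greaterThanLessThan_empty_iff not_less)
  ultimately show thesis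
    using that by blast
qed

lemma countable_components_open:
  fixes V :: "'a::euclidean_space set"
  assumes "open V"
  shows "countable (components V)"
proof (rule countable_disjoint_open_subsets)
  show "open C" if "C \<in> components V" for C
    using open_components[OF assms that] .
  show "pairwise disjnt (components V)"
    using components_nonoverlap unfolding pairwise_def disjnt_def by blast
qed

lemma sum_measure_components_le:
  fixes V :: "'a::euclidean_space set"
  assumes "open V" "V \<in> lmeasurable" "\<C> \<subseteq> components V" "finite \<C>"
  shows "(\<Sum>C\<in>\<C>. measure lebesgue C) \<le> measure lebesgue V"
proof -
  have sub: "C \<subseteq> V" and sets: "C \<in> sets lebesgue" if "C \<in> \<C>" for C
  proof -
    show "C \<subseteq> V" using assms(3) that in_components_subset by blast
    have "open C" using assms(1,3) that open_components by blast
    then show "C \<in> sets lebesgue" by (simp add: borel_open)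
  qed
  have "(\<Sum>C\<in>\<C>. measure lebesgue C) = measure lebesgue (\<Union>\<C>)"
  proof (rule measure_Union'[symmetric])
    show "C \<in> lmeasurable" if "C \<in> \<C>" for C
      using fmeasurableI2[OF assms(2) sub sets] that by blast
    show "pairwise disjnt \<C>"
      using assms(3) components_nonoverlap unfolding pairwise_def disjnt_def by blast
  qed fact
  also have "\<dots> \<le> measure lebesgue V"
  proof (rule measure_mono_fmeasurable)
    show "\<Union>\<C> \<subseteq> V"
      using sub by blast
    show "\<Union>\<C> \<in> sets lebesgue"
      using assms(4) sets by (intro sets.finite_Union) auto
  qed fact
  finally show ?thesis .
qed

lemma continuous_on_image_subset_closed_segment:
  fixes f :: "real \<Rightarrow> real"
  assumes "continuous_on {\<alpha>..\<beta>} f" "\<alpha> \<le> \<beta>"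
  obtains p q where "\<alpha> \<le> p" "p \<le> q" "q \<le> \<beta>" "f ` {\<alpha>..\<beta>} \<subseteq> closed_segment (f p) (f q)"
proof -
  obtain x1 where x1: "x1 \<in> {\<alpha>..\<beta>}" "\<And>y. y \<in> {\<alpha>..\<beta>} \<Longrightarrow> f x1 \<le> f y"
    using continuous_attains_inf[OF compact_Icc _ assms(1)] assms(2) by auto
  obtain x2 where x2: "x2 \<in> {\<alpha>..\<beta>}" "\<And>y. y \<in> {\<alpha>..\<beta>} \<Longrightarrow> f y \<le> f x2"
    using continuous_attains_sup[OF compact_Icc _ assms(1)] assms(2) by auto
  have "f ` {\<alpha>..\<beta>} \<subseteq> closed_segment (f x1) (f x2)"
    using x1 x2 by (auto simp: closed_segment_eq_real_ivl)
  then show thesis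
    using that[of "min x1 x2" "max x1 x2"] x1(1) x2(1) closed_segment_commute
    by (cases "x1 \<le> x2") (auto simp: min_def max_def)
qed

lemma components_image_subset_closed_segment:
  fixes f :: "real \<Rightarrow> real"
  assumes "continuous_on {a..b} f" "open V" "V \<subseteq> {a<..<b}" "C \<in> components V"
  obtains p q where "p \<le> q" "{p<..<q} \<subseteq> C" "{p..q} \<subseteq> {a..b}"
    "f ` C \<subseteq> closed_segment (f p) (f q)"
proof -
  have "bounded V"
    using assms(3) bounded_subset[of "{a<..<b}"] by (metis bounded_box box_real(1))
  then obtain \<alpha> \<beta> where "\<alpha> < \<beta>" and C: "C = {\<alpha><..<\<beta>}"
    using components_bounded_open_real[OF assms(2) _ assms(4)] by blast
  have "{\<alpha><..<\<beta>} \<subseteq> {a<..<b}"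
    using assms(3,4) in_components_subset C by blast
  then have sub: "{\<alpha>..\<beta>} \<subseteq> {a..b}"
    using \<open>\<alpha> < \<beta>\<close> greaterThanLessThan_subseteq_greaterThanLessThan[of \<alpha> \<beta> a b] by auto
  obtain p q where "\<alpha> \<le> p" "p \<le> q" "q \<le> \<beta>" and seg: "f ` {\<alpha>..\<beta>} \<subseteq> closed_segment (f p) (f q)"
    using continuous_on_image_subset_closed_segment[OF continuous_on_subset[OF assms(1) sub]]
      \<open>\<alpha> < \<beta>\<close> by (metis less_imp_le)
  show thesis
  proof (rule that[OF \<open>p \<le> q\<close>])
    show "{p<..<q} \<subseteq> C" "{p..q} \<subseteq> {a..b}"
      using C sub \<open>\<alpha> \<le> p\<close> \<open>q \<le> \<beta>\<close> by auto
    show "f ` C \<subseteq> closed_segment (f p) (f q)"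
      using C seg by auto
  qed
qed

lemma components_segment_cover:
  fixes f :: "real \<Rightarrow> real"
  assumes "continuous_on {a..b} f" "open V" "V \<subseteq> {a<..<b}"
  obtains p q where
    "\<And>C. C \<in> components V \<Longrightarrow> p C \<le> q C \<and> {p C<..<q C} \<subseteq> C \<and> {p C..q C} \<subseteq> {a..b}"
    "disjoint_family_on (\<lambda>C. {p C<..<q C}) (components V)"
    "f ` V \<subseteq> (\<Union>C\<in>components V. closed_segment (f (p C)) (f (q C)))"
proof -
  have "\<exists>p q. p \<le> q \<and> {p<..<q} \<subseteq> C \<and> {p..q} \<subseteq> {a..b} \<and> f ` C \<subseteq> closed_segment (f p) (f q)"
    if C: "C \<in> components V" for C
  proof -
    obtain p q where "p \<le> q" "{p<..<q} \<subseteq> C" "{p..q} \<subseteq> {a..b}" "f ` C \<subseteq> closed_segment (f p) (f q)"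
      using components_image_subset_closed_segment[OF assms C] .
    then show ?thesis by blast
  qed
  then obtain p q where pq: "\<And>C. C \<in> components V \<Longrightarrow> p C \<le> q C \<and> {p C<..<q C} \<subseteq> C \<and>
      {p C..q C} \<subseteq> {a..b} \<and> f ` C \<subseteq> closed_segment (f (p C)) (f (q C))"
    by metis
  show thesis
  proof (rule that)
    show "p C \<le> q C \<and> {p C<..<q C} \<subseteq> C \<and> {p C..q C} \<subseteq> {a..b}" if "C \<in> components V" for C
      using pq[OF that] by blast
    have "{p C<..<q C} \<inter> {p C'<..<q C'} = {}"
      if "C \<in> components V" "C' \<in> components V" "C \<noteq> C'" for C C'
    proof -
      have "C \<inter> C' = {}"
        using that components_nonoverlap by blast
      moreover have "{p C<..<q C} \<subseteq> C" "{p C'<..<q C'} \<subseteq> C'"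
        using that pq by blast+
      ultimately show ?thesis by blast
    qed
    then show "disjoint_family_on (\<lambda>C. {p C<..<q C}) (components V)"
      unfolding disjoint_family_on_def by blast
    show "f ` V \<subseteq> (\<Union>C\<in>components V. closed_segment (f (p C)) (f (q C)))"
    proof
      fix y assume "y \<in> f ` V"
      then obtain x C where "y = f x" "x \<in> C" "C \<in> components V"
        using Union_components[of V] by (metis UnionE imageE)
      then show "y \<in> (\<Union>C\<in>components V. closed_segment (f (p C)) (f (q C)))"
        using pq by blast
    qed
  qed
qed

lemma sum_subintervals_components_le:
  fixes V :: "real set"
  assumes "open V" "V \<in> lmeasurable" "\<C> \<subseteq> components V" "finite \<C>"
    and "\<And>C. C \<in> \<C> \<Longrightarrow> p C \<le> q C \<and> {p C<..<q C} \<subseteq> C"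
  shows "(\<Sum>C\<in>\<C>. q C - p C) \<le> measure lebesgue V"
proof -
  have "(\<Sum>C\<in>\<C>. q C - p C) \<le> (\<Sum>C\<in>\<C>. measure lebesgue C)"
  proof (rule sum_mono)
    fix C assume "C \<in> \<C>"
    then have C: "C \<in> components V"
      using assms(3) by blast
    have "C \<in> lmeasurable"
      using C fmeasurableI2[OF assms(2)] open_components[OF assms(1)] in_components_subset
      by (metis borel_open sets_completionI_sets sets_lborel)
    then have "measure lebesgue {p C<..<q C} \<le> measure lebesgue C"
      using assms(5)[OF \<open>C \<in> \<C>\<close>] by (intro measure_mono_fmeasurable) auto
    then show "q C - p C \<le> measure lebesgue C"
      using assms(5)[OF \<open>C \<in> \<C>\<close>] by simp
  qed
  also have "\<dots> \<le> measure lebesgue V"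
    using sum_measure_components_le[OF assms(1-4)] .
  finally show ?thesis .
qed

lemma abs_continuous_on_small_open_image:
  fixes f :: "real \<Rightarrow> real"
  assumes f: "abs_continuous_on {a..b} f" and "0 < e"
  obtains d where "0 < d"
    and "\<And>V. open V \<Longrightarrow> V \<subseteq> {a<..<b} \<Longrightarrow> measure lebesgue V < d \<Longrightarrow>
           \<exists>T. f ` V \<subseteq> T \<and> T \<in> lmeasurable \<and> measure lebesgue T \<le> e"
proof -
  obtain d where "0 < d" and small: "\<And>I u v. finite I \<Longrightarrow>
      (\<And>C::real set. C \<in> I \<Longrightarrow> u C \<le> v C \<and> {u C..v C} \<subseteq> {a..b}) \<Longrightarrow>
      disjoint_family_on (\<lambda>C. {u C<..<v C}) I \<Longrightarrow> (\<Sum>C\<in>I. v C - u C) < d \<Longrightarrow>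
      (\<Sum>C\<in>I. \<bar>f (v C) - f (u C)\<bar>) < e"
    using abs_continuous_onD[OF f \<open>0 < e\<close>] by blast
  show thesis
  proof (rule that[OF \<open>0 < d\<close>])
    fix V assume "open V" "V \<subseteq> {a<..<b}" "measure lebesgue V < d"
    have "V \<in> lmeasurable"
      using lmeasurable_open[OF bounded_subset[OF bounded_Ioo \<open>V \<subseteq> {a<..<b}\<close>] \<open>open V\<close>] .
    have "continuous_on {a..b} f"
      using abs_continuous_on_imp_continuous_on[OF f] by simp
    then obtain p q where
      pq: "\<And>C. C \<in> components V \<Longrightarrow> p C \<le> q C \<and> {p C<..<q C} \<subseteq> C \<and> {p C..q C} \<subseteq> {a..b}"
      and disj: "disjoint_family_on (\<lambda>C. {p C<..<q C}) (components V)"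
      and cover: "f ` V \<subseteq> (\<Union>C\<in>components V. closed_segment (f (p C)) (f (q C)))"
      using components_segment_cover[OF _ \<open>open V\<close> \<open>V \<subseteq> {a<..<b}\<close>] by blast
    have countable: "countable (components V)"
      using countable_components_open[OF \<open>open V\<close>] .
    have seg: "closed_segment (f (p C)) (f (q C)) \<in> lmeasurable" for C
      using compact_segment lmeasurable_compact by blast
    have finite_bound: "measure lebesgue (\<Union>C\<in>\<C>. closed_segment (f (p C)) (f (q C))) \<le> e"
      if "\<C> \<subseteq> components V" "finite \<C>" for \<C>
    proof -
      have pq\<C>: "p C \<le> q C \<and> {p C<..<q C} \<subseteq> C \<and> {p C..q C} \<subseteq> {a..b}" if "C \<in> \<C>" for C
        using pq that \<open>\<C> \<subseteq> components V\<close> by blast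
      have "(\<Sum>C\<in>\<C>. q C - p C) \<le> measure lebesgue V"
        using sum_subintervals_components_le[OF \<open>open V\<close> \<open>V \<in> lmeasurable\<close> that] pq\<C> by blast
      then have "(\<Sum>C\<in>\<C>. \<bar>f (q C) - f (p C)\<bar>) < e"
        using \<open>measure lebesgue V < d\<close> pq\<C> disjoint_family_on_mono[OF that(1) disj]
        by (intro small[OF \<open>finite \<C>\<close>]) auto
      moreover have "measure lebesgue (\<Union>C\<in>\<C>. closed_segment (f (p C)) (f (q C)))
          \<le> (\<Sum>C\<in>\<C>. measure lebesgue (closed_segment (f (p C)) (f (q C))))"
        using measure_UNION_le[OF \<open>finite \<C>\<close> fmeasurableD[OF seg]] .
      moreover have "measure lebesgue (closed_segment x y) = \<bar>y - x\<bar>" for x y :: real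
        by (simp add: closed_segment_eq_real_ivl)
      ultimately show ?thesis
        by simp
    qed
    show "\<exists>T. f ` V \<subseteq> T \<and> T \<in> lmeasurable \<and> measure lebesgue T \<le> e"
      using cover fmeasurable_UN_bound[OF countable seg finite_bound]
        measure_UN_bound[OF countable seg finite_bound] by blast
  qed
qed

lemma negligible_image_abs_continuous_on:
  fixes f :: "real \<Rightarrow> real"
  assumes f: "abs_continuous_on {a..b} f" and "negligible N" "N \<subseteq> {a..b}"
  shows "negligible (f ` N)"
proof -
  have "negligible (f ` (N \<inter> {a<..<b}))"
    unfolding negligible_outer_le
  proof (intro allI impI)
    fix e :: real assume "0 < e"
    then obtain d where "0 < d" and small: "\<And>V. open V \<Longrightarrow> V \<subseteq> {a<..<b} \<Longrightarrow>
        measure lebesgue V < d \<Longrightarrow> \<exists>T. f ` V \<subseteq> T \<and> T \<in> lmeasurable \<and> measure lebesgue T \<le> e"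
      using abs_continuous_on_small_open_image[OF f] by blast
    obtain U where "open U" "N \<subseteq> U" "U \<in> lmeasurable" "measure lebesgue U < d"
      using negligible_imp_open_superset[OF \<open>negligible N\<close> \<open>0 < d\<close>] .
    have "measure lebesgue (U \<inter> {a<..<b}) \<le> measure lebesgue U"
      using \<open>open U\<close> \<open>U \<in> lmeasurable\<close> by (intro measure_mono_fmeasurable) auto
    then have "measure lebesgue (U \<inter> {a<..<b}) < d"
      using \<open>measure lebesgue U < d\<close> by linarith
    moreover have "open (U \<inter> {a<..<b})"
      using \<open>open U\<close> by (simp add: open_Int)
    ultimately obtain T where "f ` (U \<inter> {a<..<b}) \<subseteq> T" "T \<in> lmeasurable" "measure lebesgue T \<le> e"
      using small[of "U \<inter> {a<..<b}"] by blast
    then show "\<exists>T. f ` (N \<inter> {a<..<b}) \<subseteq> T \<and> T \<in> lmeasurable \<and> measure lebesgue T \<le> e"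
      using \<open>N \<subseteq> U\<close> by blast
  qed
  moreover have "f ` N \<subseteq> insert (f a) (insert (f b) (f ` (N \<inter> {a<..<b})))"
  proof
    fix y assume "y \<in> f ` N"
    then obtain x where "x \<in> N" "y = f x" by blast
    then have "x = a \<or> x = b \<or> x \<in> N \<inter> {a<..<b}"
      using \<open>N \<subseteq> {a..b}\<close> by fastforce
    then show "y \<in> insert (f a) (insert (f b) (f ` (N \<inter> {a<..<b})))"
      using \<open>y = f x\<close> by blast
  qed
  ultimately show ?thesis
    by (metis negligible_insert negligible_subset)
qed

lemma measure_image_le_integral_abs_deriv:
  fixes f f' :: "real \<Rightarrow> real"
  assumes deriv: "\<And>x. x \<in> S \<Longrightarrow> (f has_real_derivative f' x) (at x within S)"
    and int: "(\<lambda>x. \<bar>f' x\<bar>) integrable_on S"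
  shows "f ` S \<in> lmeasurable" and "measure lebesgue (f ` S) \<le> integral S (\<lambda>x. \<bar>f' x\<bar>)"
proof -
  let ?lift = "vec :: real \<Rightarrow> real^1"
  let ?F = "\<lambda>x::real^1. ?lift (f (x $ 1))"
  let ?F' = "\<lambda>x::real^1. (*\<^sub>R) (f' (x $ 1)) :: real^1 \<Rightarrow> real^1"
  have deriv': "(?F has_derivative ?F' x) (at x within ?lift ` S)" if x: "x \<in> ?lift ` S" for x
  proof -
    obtain z where z: "z \<in> S" "x = ?lift z"
      using x by auto
    have "(f has_derivative (\<lambda>y. y * f' z)) (at z within S)"
      using deriv[OF z(1)] unfolding has_field_derivative_def by (simp add: mult.commute[of _ "f' z"])
    from has_derivative_vector_1[of f f' z S, OF this] show ?thesis
      using z by simp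
  qed
  have int': "(\<lambda>x::real^1. \<bar>det (matrix (?F' x))\<bar> * 1) integrable_on ?lift ` S"
  proof -
    obtain y where y: "((\<lambda>x. \<bar>f' x\<bar>) has_integral y) S"
      using int by blast
    have "((\<lambda>x::real^1. \<bar>f' (x $ 1)\<bar>) has_integral y) (?lift ` S)"
      by (rule has_integral_vec1_D) (use y in \<open>simp add: o_def image_image\<close>)
    then show ?thesis
      by (auto simp: integrable_on_def)
  qed
  have "(\<lambda>x. 1::real) integrable_on ?F ` (?lift ` S) \<and>
        integral (?F ` (?lift ` S)) (\<lambda>x. 1::real) \<le> integral (?lift ` S) (\<lambda>x. \<bar>det (matrix (?F' x))\<bar> * 1)"
    by (rule integral_on_image_ubound_nonneg[OF _ deriv' int']) auto
  moreover have "?F ` (?lift ` S) = ?lift ` (f ` S)"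
    by (auto simp: image_image)
  ultimately have one: "(\<lambda>x. 1::real) integrable_on ?lift ` (f ` S)"
     "integral (?lift ` (f ` S)) (\<lambda>x. 1::real) \<le> integral (?lift ` S) (\<lambda>x. \<bar>f' (x $ 1)\<bar>)"
    by auto
  have "integral (?lift ` (f ` S)) (\<lambda>x. 1::real) = integral (f ` S) (\<lambda>x. 1::real)"
    "integral (?lift ` S) (\<lambda>x. \<bar>f' (x $ 1)\<bar>) = integral S (\<lambda>x. \<bar>f' x\<bar>)"
    by (subst integral_vec1_eq; simp add: image_image o_def)+
  moreover have "(\<lambda>x. 1::real) integrable_on f ` S"
  proof -
    obtain y where "((\<lambda>x. 1::real) has_integral y) (?lift ` (f ` S))"
      using one(1) by blast
    from has_integral_vec1_I[OF this] show ?thesis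
      by (auto simp: integrable_on_def image_image o_def)
  qed
  ultimately show "f ` S \<in> lmeasurable" "measure lebesgue (f ` S) \<le> integral S (\<lambda>x. \<bar>f' x\<bar>)"
    using one(2) by (simp_all add: lmeasurable_iff_integrable_on lmeasure_integral)
qed

lemma abs_diff_le_measure_image:
  fixes f :: "real \<Rightarrow> real"
  assumes "continuous_on {a..b} f" "a \<le> b"
  shows "\<bar>f b - f a\<bar> \<le> measure lebesgue (f ` {a..b})"
proof -
  have "f ` {a..b} \<in> lmeasurable"
    using compact_continuous_image[OF assms(1) compact_Icc] lmeasurable_compact by blast
  moreover have "closed_segment (f a) (f b) \<subseteq> f ` {a..b}"
  proof (rule closed_segment_subset)
    show "f a \<in> f ` {a..b}" "f b \<in> f ` {a..b}"
      using assms(2) by auto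
    show "convex (f ` {a..b})"
      using connected_continuous_image[OF assms(1) connected_Icc] is_interval_connected_1
        is_interval_convex_1 by blast
  qed
  ultimately have "measure lebesgue (closed_segment (f a) (f b)) \<le> measure lebesgue (f ` {a..b})"
    by (intro measure_mono_fmeasurable) (auto intro: fmeasurableD)
  then show ?thesis
    by (simp add: closed_segment_eq_real_ivl abs_minus_commute split: if_splits)
qed

lemma borel_measurable_deriv:
  fixes f f' :: "real \<Rightarrow> real"
  assumes cont: "continuous_on {a..b} f" and T: "T \<subseteq> {a..<b}" "T \<in> sets lebesgue"
    and deriv: "\<And>t. t \<in> T \<Longrightarrow> (f has_real_derivative f' t) (at t)"
  shows "f' \<in> borel_measurable (lebesgue_on T)"
proof (rule borel_measurable_LIMSEQ_real)
  \<comment> \<open>truncating at \<open>b\<close> keeps the quotients continuous; for \<open>t < b\<close> it is eventually inactive\<close>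
  let ?Q = "\<lambda>n t. real (Suc n) * (f (min (t + 1 / real (Suc n)) b) - f t)"
  fix t assume "t \<in> space (lebesgue_on T)"
  then have "t \<in> T" "t < b"
    using T by auto
  have "((\<lambda>h. (f (t + h) - f t) / h) \<longlongrightarrow> f' t) (at 0)"
    using deriv[OF \<open>t \<in> T\<close>] by (simp add: DERIV_def)
  moreover have "(\<lambda>n. 1 / real (Suc n)) \<longlonglongrightarrow> 0"
    using LIMSEQ_inverse_real_of_nat by (simp add: inverse_eq_divide)
  then have "filterlim (\<lambda>n. 1 / real (Suc n)) (at 0) sequentially"
    by (auto simp: filterlim_at)
  ultimately have "(\<lambda>n. real (Suc n) * (f (t + 1 / real (Suc n)) - f t)) \<longlonglongrightarrow> f' t"
    by (auto dest: filterlim_compose simp: o_def field_simps)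
  moreover have "eventually (\<lambda>n. 1 / real (Suc n) < b - t) sequentially"
    using order_tendstoD(2)[OF \<open>(\<lambda>n. 1 / real (Suc n)) \<longlonglongrightarrow> 0\<close>, of "b - t"] \<open>t < b\<close> by simp
  then have "eventually (\<lambda>n. real (Suc n) * (f (t + 1 / real (Suc n)) - f t) = ?Q n t) sequentially"
    by eventually_elim (simp add: min_def)
  ultimately show "(\<lambda>n. ?Q n t) \<longlonglongrightarrow> f' t"
    by (rule Lim_transform_eventually)
next
  fix n :: nat
  have "(\<lambda>t. min (t + 1 / real (Suc n)) b) ` {a..b} \<subseteq> {a..b}"
    by (auto simp: min_def) (smt (verit) of_nat_0_le_iff divide_nonneg_nonneg)
  then have "continuous_on {a..b} (\<lambda>t. real (Suc n) * (f (min (t + 1 / real (Suc n)) b) - f t))"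
    by (intro continuous_intros continuous_on_compose2[OF cont] cont) auto
  then have "continuous_on T (\<lambda>t. real (Suc n) * (f (min (t + 1 / real (Suc n)) b) - f t))"
    by (rule continuous_on_subset) (use T in auto)
  then show "(\<lambda>t. real (Suc n) * (f (min (t + 1 / real (Suc n)) b) - f t)) \<in> borel_measurable (lebesgue_on T)"
    by (rule continuous_imp_measurable_on_sets_lebesgue[OF _ T(2)])
qed

lemma abs_continuous_on_diff_le_integral_on:
  fixes f f' :: "real \<Rightarrow> real"
  assumes f: "abs_continuous_on {a..b} f" and "a \<le> b" "T \<subseteq> {a..b}" "negligible ({a..b} - T)"
    and deriv: "\<And>t. t \<in> T \<Longrightarrow> (f has_real_derivative f' t) (at t within T)"
    and int: "(\<lambda>t. \<bar>f' t\<bar>) integrable_on T"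
  shows "\<bar>f b - f a\<bar> \<le> integral T (\<lambda>t. \<bar>f' t\<bar>)"
proof -
  have cont: "continuous_on {a..b} f"
    using abs_continuous_on_imp_continuous_on[OF f] by simp
  note image_T = measure_image_le_integral_abs_deriv[OF deriv int]
  have N: "negligible (f ` ({a..b} - T))"
    using negligible_image_abs_continuous_on[OF f \<open>negligible ({a..b} - T)\<close>] by blast
  have "f ` {a..b} \<in> lmeasurable"
    using compact_continuous_image[OF cont compact_Icc] lmeasurable_compact by blast
  then have "measure lebesgue (f ` {a..b}) \<le> measure lebesgue (f ` T \<union> f ` ({a..b} - T))"
    using image_T(1) negligible_imp_measurable[OF N] by (intro measure_mono_fmeasurable) auto
  also have "\<dots> \<le> measure lebesgue (f ` T) + measure lebesgue (f ` ({a..b} - T))"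
    using image_T(1) negligible_imp_sets[OF N] by (intro measure_Un_le) auto
  also have "\<dots> \<le> integral T (\<lambda>t. \<bar>f' t\<bar>)"
    using image_T(2) negligible_imp_measure0[OF N] by simp
  finally show ?thesis
    using abs_diff_le_measure_image[OF cont \<open>a \<le> b\<close>] by linarith
qed

lemma abs_continuous_on_diff_le_integral:
  fixes f f' :: "real \<Rightarrow> real"
  assumes f: "abs_continuous_on {a..b} f"
    and deriv: "AE t in lebesgue. t \<in> {a..b} \<longrightarrow> (f has_real_derivative f' t) (at t)"
    and bounded: "\<And>t. t \<in> {a..b} \<Longrightarrow> \<bar>f' t\<bar> \<le> K" and "a \<le> b"
  shows "(\<lambda>t. \<bar>f' t\<bar>) integrable_on {a..b}" and "\<bar>f b - f a\<bar> \<le> integral {a..b} (\<lambda>t. \<bar>f' t\<bar>)"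
proof -
  from deriv obtain E where E: "{t \<in> space lebesgue. \<not> (t \<in> {a..b} \<longrightarrow> (f has_real_derivative f' t) (at t))} \<subseteq> E"
      "emeasure lebesgue E = 0" "E \<in> sets lebesgue"
    by (rule AE_E)
  then have "negligible E"
    by (simp add: negligible_iff_null_sets null_sets_def)
  define T where "T = {a<..<b} - E"
  have "T \<in> sets lebesgue"
    unfolding T_def using \<open>negligible E\<close> by (intro sets.Diff) (auto intro: negligible_imp_sets)
  then have T: "T \<subseteq> {a..<b}" "T \<in> sets lebesgue" "T \<in> lmeasurable"
    using bounded_set_imp_lmeasurable[OF bounded_subset[OF bounded_Ioo, of T a b]] by (auto simp: T_def)
  have derivE: "(f has_real_derivative f' t) (at t)" if "t \<in> {a..b}" "t \<notin> E" for t
    using E(1) that by auto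
  have derivT: "(f has_real_derivative f' t) (at t)" if "t \<in> T" for t
    using derivE[of t] that unfolding T_def by (auto simp: less_imp_le)
  have "continuous_on {a..b} f"
    using abs_continuous_on_imp_continuous_on[OF f] by simp
  then have "(\<lambda>t. \<bar>f' t\<bar>) \<in> borel_measurable (lebesgue_on T)"
    using borel_measurable_deriv[OF _ T(1,2) derivT] by measurable
  then have intT: "(\<lambda>t. \<bar>f' t\<bar>) integrable_on T"
    using bounded T by (force intro: measurable_bounded_by_integrable_imp_integrable[OF _ integrable_on_const[OF T(3), of K] _ T(2)])
  have "negligible ({a..b} - T)"
    by (rule negligible_subset[of "insert a (insert b E)"]) (use \<open>negligible E\<close> in \<open>auto simp: T_def\<close>)
  moreover have "T \<subseteq> {a..b}"
    using T(1) by auto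
  ultimately have spike: "{t \<in> T - {a..b}. P t} = {}" "negligible {t \<in> {a..b} - T. P t}" for P
    by (auto intro: negligible_subset)
  show "(\<lambda>t. \<bar>f' t\<bar>) integrable_on {a..b}"
    by (rule integrable_spike_set[OF intT]) (simp_all only: spike negligible_empty)
  have "\<bar>f b - f a\<bar> \<le> integral T (\<lambda>t. \<bar>f' t\<bar>)"
    using abs_continuous_on_diff_le_integral_on[OF f \<open>a \<le> b\<close> \<open>T \<subseteq> {a..b}\<close> \<open>negligible ({a..b} - T)\<close> _ intT]
      derivT has_field_derivative_at_within by blast
  also have "\<dots> = integral {a..b} (\<lambda>t. \<bar>f' t\<bar>)"
    by (rule integral_spike_set) (simp_all only: spike negligible_empty)
  finally show "\<bar>f b - f a\<bar> \<le> integral {a..b} (\<lambda>t. \<bar>f' t\<bar>)" .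
qed

section \<open>Power interpolants and s-convexity\<close>

definition powr_interpolant :: "real \<Rightarrow> real \<Rightarrow> real \<Rightarrow> real \<Rightarrow> real \<Rightarrow> real \<Rightarrow> real" where
  "powr_interpolant r p q A B t = ((q - t) / (q - p)) powr r * A + ((t - p) / (q - p)) powr r * B"

lemma powr_interpolant_left [simp]: "p \<noteq> q \<Longrightarrow> powr_interpolant r p q A B p = A"
  and powr_interpolant_right [simp]: "p \<noteq> q \<Longrightarrow> powr_interpolant r p q A B q = B"
  by (simp_all add: powr_interpolant_def)

lemma s_convex_on_le_powr_interpolant:
  assumes "s_convex_on s {a..b} h" "a \<le> p" "p < q" "q \<le> b" "u \<in> {p..q}"
  shows "h u \<le> powr_interpolant s p q (h p) (h q) u"
proof -
  have "(q - u) / (q - p) * p + (u - p) / (q - p) * q = ((q - u) * p + (u - p) * q) / (q - p)"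
    by (simp add: add_divide_distrib)
  also have "(q - u) * p + (u - p) * q = u * (q - p)"
    by (simp add: algebra_simps)
  also have "u * (q - p) / (q - p) = u"
    using assms(3) by simp
  finally have u: "(q - u) / (q - p) * p + (u - p) / (q - p) * q = u" .
  have "(q - u) / (q - p) + (u - p) / (q - p) = 1"
    using assms(3) by (simp add: add_divide_distrib[symmetric])
  moreover have "0 \<le> (q - u) / (q - p)" "0 \<le> (u - p) / (q - p)" "p \<in> {a..b}" "q \<in> {a..b}"
    using assms(2-5) by auto
  ultimately have "h ((q - u) / (q - p) * p + (u - p) / (q - p) * q)
      \<le> ((q - u) / (q - p)) powr s * h p + ((u - p) / (q - p)) powr s * h q"
    using assms(1) unfolding s_convex_on_def by blast
  then show ?thesis
    unfolding u powr_interpolant_def .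
qed

lemma s_convex_on_le_endpoints:
  assumes "s_convex_on s {a..b} h" "0 \<le> s" "a < b" "u \<in> {a..b}" "0 \<le> h a" "0 \<le> h b"
  shows "h u \<le> h a + h b"
proof -
  have "h u \<le> ((b - u) / (b - a)) powr s * h a + ((u - a) / (b - a)) powr s * h b"
    using s_convex_on_le_powr_interpolant[OF assms(1) _ assms(3) _ assms(4)]
    by (simp add: powr_interpolant_def)
  also have "\<dots> \<le> 1 * h a + 1 * h b"
    using assms by (intro add_mono mult_right_mono powr_le1) auto
  finally show ?thesis
    by simp
qed

lemma continuous_on_powr_interpolant:
  assumes "0 < r" "p < q" "{x..y} \<subseteq> {p..q}"
  shows "continuous_on {x..y} (powr_interpolant r p q A B)"
  unfolding powr_interpolant_def
proof (intro continuous_on_add continuous_on_mult_right continuous_on_powr')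
  show "\<forall>t\<in>{x..y}. 0 \<le> (q - t) / (q - p) \<and> ((q - t) / (q - p) = 0 \<longrightarrow> 0 < r)"
    "\<forall>t\<in>{x..y}. 0 \<le> (t - p) / (q - p) \<and> ((t - p) / (q - p) = 0 \<longrightarrow> 0 < r)"
    using assms by auto
qed (intro continuous_intros; use assms in auto)+

lemma powr_interpolant_has_real_derivative:
  assumes "p < t" "t < q"
  shows "(powr_interpolant (r + 1) p q (- A) B has_real_derivative
           (r + 1) / (q - p) * powr_interpolant r p q A B t) (at t)"
proof -
  have "((\<lambda>t. (q - t) / (q - p)) has_real_derivative (0 - 1) / (q - p)) (at t)"
    "((\<lambda>t. (t - p) / (q - p)) has_real_derivative (1 - 0) / (q - p)) (at t)"
    by (intro DERIV_cdivide DERIV_diff DERIV_const DERIV_ident)+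
  moreover have "0 < (q - t) / (q - p)" "0 < (t - p) / (q - p)"
    using assms by simp_all
  ultimately have "(powr_interpolant (r + 1) p q (- A) B has_real_derivative
      (r + 1) * ((q - t) / (q - p)) powr (r + 1 - of_nat 1) * ((0 - 1) / (q - p)) * (- A)
      + (r + 1) * ((t - p) / (q - p)) powr (r + 1 - of_nat 1) * ((1 - 0) / (q - p)) * B) (at t)"
    unfolding powr_interpolant_def by (intro DERIV_add DERIV_cmult_right DERIV_fun_powr)
  moreover have "(r + 1) * ((q - t) / (q - p)) powr (r + 1 - of_nat 1) * ((0 - 1) / (q - p)) * (- A)
      + (r + 1) * ((t - p) / (q - p)) powr (r + 1 - of_nat 1) * ((1 - 0) / (q - p)) * B
      = (r + 1) / (q - p) * powr_interpolant r p q A B t"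
    by (simp add: powr_interpolant_def distrib_left)
  ultimately show ?thesis
    by simp
qed

lemma powr_interpolant_has_integral:
  assumes "-1 < r" "p < q" "p \<le> x" "x \<le> y" "y \<le> q"
  shows "(powr_interpolant r p q A B has_integral
           (q - p) / (r + 1) * (powr_interpolant (r + 1) p q (- A) B y - powr_interpolant (r + 1) p q (- A) B x))
         {x..y}"
proof -
  let ?F = "\<lambda>t. (q - p) / (r + 1) * powr_interpolant (r + 1) p q (- A) B t"
  have "(powr_interpolant r p q A B has_integral ?F y - ?F x) {x..y}"
  proof (rule fundamental_theorem_of_calculus_interior[OF \<open>x \<le> y\<close>])
    show "continuous_on {x..y} ?F"
      using assms by (intro continuous_intros continuous_on_powr_interpolant) auto
    fix t assume "t \<in> {x<..<y}"
    then have "(?F has_real_derivative (q - p) / (r + 1) * ((r + 1) / (q - p) * powr_interpolant r p q A B t)) (at t)"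
      using assms by (intro DERIV_cmult powr_interpolant_has_real_derivative) auto
    then show "(?F has_vector_derivative powr_interpolant r p q A B t) (at t)"
      using assms by (simp add: has_real_derivative_iff_has_vector_derivative)
  qed
  then show ?thesis
    by (simp add: right_diff_distrib)
qed

lemma integral_abs_diff_endpoints_le:
  fixes f F :: "real \<Rightarrow> real"
  assumes "continuous_on {p..q} f" "p \<le> q" "(F has_integral I) {p..q}"
    and "\<And>x y. p \<le> x \<Longrightarrow> x \<le> y \<Longrightarrow> y \<le> q \<Longrightarrow> \<bar>f y - f x\<bar> \<le> F y - F x"
  shows "integral {p..q} (\<lambda>t. \<bar>f t - f q\<bar>) \<le> (q - p) * F q - I"
    and "integral {p..q} (\<lambda>t. \<bar>f t - f p\<bar>) \<le> I - (q - p) * F p"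
proof -
  have const: "((\<lambda>t. F c) has_integral (q - p) * F c) {p..q}" for c
    using has_integral_const_real[of "F c" p q] assms(2) by (simp add: mult.commute)
  have int: "(\<lambda>t. \<bar>f t - f c\<bar>) integrable_on {p..q}" for c
    using assms(1) by (intro integrable_continuous_interval continuous_intros)
  show "integral {p..q} (\<lambda>t. \<bar>f t - f q\<bar>) \<le> (q - p) * F q - I"
  proof (rule has_integral_le[OF integrable_integral[OF int] has_integral_diff[OF const assms(3)]])
    show "\<bar>f t - f q\<bar> \<le> F q - F t" if "t \<in> {p..q}" for t
      using assms(4)[of t q] that by (simp add: abs_minus_commute)
  qed
  show "integral {p..q} (\<lambda>t. \<bar>f t - f p\<bar>) \<le> I - (q - p) * F p"
  proof (rule has_integral_le[OF integrable_integral[OF int] has_integral_diff[OF assms(3) const]])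
    show "\<bar>f t - f p\<bar> \<le> F t - F p" if "t \<in> {p..q}" for t
      using assms(4)[of p t] that by simp
  qed
qed

lemma integral_abs_diff_endpoints_le_powr_interpolant:
  fixes f h :: "real \<Rightarrow> real"
  assumes "continuous_on {p..q} f" "p < q" "-1 < s"
    and ftc: "\<And>x y. p \<le> x \<Longrightarrow> x \<le> y \<Longrightarrow> y \<le> q \<Longrightarrow>
               h integrable_on {x..y} \<and> \<bar>f y - f x\<bar> \<le> integral {x..y} h"
    and bound: "\<And>t. t \<in> {p..q} \<Longrightarrow> h t \<le> powr_interpolant s p q A B t"
  shows "integral {p..q} (\<lambda>t. \<bar>f t - f q\<bar>) \<le> (q - p)\<^sup>2 / ((s + 1) * (s + 2)) * A + (q - p)\<^sup>2 / (s + 2) * B"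
    and "integral {p..q} (\<lambda>t. \<bar>f t - f p\<bar>) \<le> (q - p)\<^sup>2 / (s + 2) * A + (q - p)\<^sup>2 / ((s + 1) * (s + 2)) * B"
proof -
  \<comment> \<open>a primitive of the interpolant, by \<open>powr_interpolant_has_integral\<close>\<close>
  define F where "F t = (q - p) / (s + 1) * powr_interpolant (s + 1) p q (- A) B t" for t
  have "\<bar>f y - f x\<bar> \<le> F y - F x" if "p \<le> x" "x \<le> y" "y \<le> q" for x y
  proof -
    have "\<bar>f y - f x\<bar> \<le> integral {x..y} h"
      using ftc[OF that] by blast
    also have "\<dots> \<le> F y - F x"
    proof (rule has_integral_le[OF integrable_integral])
      show "h integrable_on {x..y}"
        using ftc[OF that] by blast
      show "(powr_interpolant s p q A B has_integral F y - F x) {x..y}"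
        using powr_interpolant_has_integral[OF \<open>-1 < s\<close> \<open>p < q\<close> that]
        by (simp add: F_def right_diff_distrib)
      show "h t \<le> powr_interpolant s p q A B t" if "t \<in> {x..y}" for t
        using bound that \<open>p \<le> x\<close> \<open>y \<le> q\<close> by auto
    qed
    finally show ?thesis .
  qed
  moreover have "(F has_integral (q - p) / (s + 1) * ((q - p) / (s + 2) * (B - A))) {p..q}"
    using powr_interpolant_has_integral[of "s + 1" p q p q "- A" B] \<open>-1 < s\<close> \<open>p < q\<close>
    unfolding F_def by (intro has_integral_mult_right) (simp add: add.assoc)
  ultimately have "integral {p..q} (\<lambda>t. \<bar>f t - f q\<bar>) \<le> (q - p) * F q - (q - p) / (s + 1) * ((q - p) / (s + 2) * (B - A))"
    "integral {p..q} (\<lambda>t. \<bar>f t - f p\<bar>) \<le> (q - p) / (s + 1) * ((q - p) / (s + 2) * (B - A)) - (q - p) * F p"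
    using integral_abs_diff_endpoints_le[OF assms(1) less_imp_le[OF \<open>p < q\<close>]] by blast+
  moreover have "0 < s + 1" "0 < s + 2"
    using \<open>-1 < s\<close> by auto
  then have "L * (L / (s + 1) * B) - L / (s + 1) * (L / (s + 2) * (B - A))
      = L\<^sup>2 / ((s + 1) * (s + 2)) * A + L\<^sup>2 / (s + 2) * B"
    "L / (s + 1) * (L / (s + 2) * (B - A)) - L * (L / (s + 1) * - A)
      = L\<^sup>2 / (s + 2) * A + L\<^sup>2 / ((s + 1) * (s + 2)) * B" for L
    by (simp_all add: divide_simps power2_eq_square) (simp_all add: algebra_simps)
  ultimately show "integral {p..q} (\<lambda>t. \<bar>f t - f q\<bar>) \<le> (q - p)\<^sup>2 / ((s + 1) * (s + 2)) * A + (q - p)\<^sup>2 / (s + 2) * B"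
    "integral {p..q} (\<lambda>t. \<bar>f t - f p\<bar>) \<le> (q - p)\<^sup>2 / (s + 2) * A + (q - p)\<^sup>2 / ((s + 1) * (s + 2)) * B"
    using \<open>p < q\<close> by (simp_all add: F_def)
qed

lemma s_convex_deriv_diff_le_integral:
  fixes f f' :: "real \<Rightarrow> real"
  assumes "a < b" "0 \<le> s" and f: "abs_continuous_on {a..b} f"
    and deriv: "AE t in lebesgue. t \<in> {a..b} \<longrightarrow> (f has_real_derivative f' t) (at t)"
    and conv: "s_convex_on s {a..b} (\<lambda>t. \<bar>f' t\<bar>)" and "a \<le> x" "x \<le> y" "y \<le> b"
  shows "(\<lambda>t. \<bar>f' t\<bar>) integrable_on {x..y}" and "\<bar>f y - f x\<bar> \<le> integral {x..y} (\<lambda>t. \<bar>f' t\<bar>)"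
proof -
  have "abs_continuous_on {x..y} f"
    using abs_continuous_on_subset[OF f] \<open>a \<le> x\<close> \<open>y \<le> b\<close> by simp
  moreover have "AE t in lebesgue. t \<in> {x..y} \<longrightarrow> (f has_real_derivative f' t) (at t)"
    using deriv by (rule eventually_mono) (use \<open>a \<le> x\<close> \<open>y \<le> b\<close> in auto)
  moreover have "\<bar>f' t\<bar> \<le> \<bar>f' a\<bar> + \<bar>f' b\<bar>" if "t \<in> {x..y}" for t
    using s_convex_on_le_endpoints[OF conv \<open>0 \<le> s\<close> \<open>a < b\<close>] that \<open>a \<le> x\<close> \<open>y \<le> b\<close> by simp
  ultimately show "(\<lambda>t. \<bar>f' t\<bar>) integrable_on {x..y}" "\<bar>f y - f x\<bar> \<le> integral {x..y} (\<lambda>t. \<bar>f' t\<bar>)"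
    using abs_continuous_on_diff_le_integral[of x y f f' "\<bar>f' a\<bar> + \<bar>f' b\<bar>"] \<open>x \<le> y\<close> by blast+
qed

lemma integral_abs_diff_endpoints_le_s_convex_deriv:
  fixes f f' :: "real \<Rightarrow> real"
  assumes "a < b" "0 \<le> s" and f: "abs_continuous_on {a..b} f"
    and deriv: "AE t in lebesgue. t \<in> {a..b} \<longrightarrow> (f has_real_derivative f' t) (at t)"
    and conv: "s_convex_on s {a..b} (\<lambda>t. \<bar>f' t\<bar>)" and "a \<le> p" "p \<le> q" "q \<le> b"
  shows "integral {p..q} (\<lambda>t. \<bar>f t - f q\<bar>)
           \<le> (q - p)\<^sup>2 / ((s + 1) * (s + 2)) * \<bar>f' p\<bar> + (q - p)\<^sup>2 / (s + 2) * \<bar>f' q\<bar>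
    \<and> integral {p..q} (\<lambda>t. \<bar>f t - f p\<bar>)
           \<le> (q - p)\<^sup>2 / (s + 2) * \<bar>f' p\<bar> + (q - p)\<^sup>2 / ((s + 1) * (s + 2)) * \<bar>f' q\<bar>"
proof (cases "p = q")
  case False
  then have "p < q"
    using \<open>p \<le> q\<close> by simp
  moreover have "\<bar>f' t\<bar> \<le> powr_interpolant s p q \<bar>f' p\<bar> \<bar>f' q\<bar> t" if "t \<in> {p..q}" for t
    using s_convex_on_le_powr_interpolant[OF conv \<open>a \<le> p\<close> \<open>p < q\<close> \<open>q \<le> b\<close> that] .
  moreover have "continuous_on {p..q} f"
    using continuous_on_subset[OF abs_continuous_on_imp_continuous_on[OF f]] assms(6-8) by simp
  ultimately show ?thesis
    using integral_abs_diff_endpoints_le_powr_interpolant[of p q f s "\<lambda>t. \<bar>f' t\<bar>"]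
      s_convex_deriv_diff_le_integral[OF assms(1-5)] assms(6-8) \<open>0 \<le> s\<close> by simp
qed simp

lemma integral_abs_diff_le_s_convex_deriv:
  fixes f f' :: "real \<Rightarrow> real"
  assumes "a < b" "0 \<le> s" and f: "abs_continuous_on {a..b} f"
    and deriv: "AE t in lebesgue. t \<in> {a..b} \<longrightarrow> (f has_real_derivative f' t) (at t)"
    and conv: "s_convex_on s {a..b} (\<lambda>t. \<bar>f' t\<bar>)" and "c \<in> {a..b}"
  shows "integral {a..b} (\<lambda>t. \<bar>f t - f c\<bar>)
    \<le> 1 / ((s + 1) * (s + 2)) * ((c - a)\<^sup>2 * \<bar>f' a\<bar> + (b - c)\<^sup>2 * \<bar>f' b\<bar>)
      + 1 / (s + 2) * ((c - a)\<^sup>2 + (b - c)\<^sup>2) * \<bar>f' c\<bar>"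
proof -
  have "(\<lambda>t. \<bar>f t - f c\<bar>) integrable_on {a..b}"
    using abs_continuous_on_imp_continuous_on[OF f]
    by (intro integrable_continuous_interval continuous_intros) auto
  then have "integral {a..b} (\<lambda>t. \<bar>f t - f c\<bar>)
      = integral {a..c} (\<lambda>t. \<bar>f t - f c\<bar>) + integral {c..b} (\<lambda>t. \<bar>f t - f c\<bar>)"
    using Henstock_Kurzweil_Integration.integral_combine[of a c b "\<lambda>t. \<bar>f t - f c\<bar>"] \<open>c \<in> {a..b}\<close> by simp
  also have "\<dots> \<le> ((c - a)\<^sup>2 / ((s + 1) * (s + 2)) * \<bar>f' a\<bar> + (c - a)\<^sup>2 / (s + 2) * \<bar>f' c\<bar>)
      + ((b - c)\<^sup>2 / (s + 2) * \<bar>f' c\<bar> + (b - c)\<^sup>2 / ((s + 1) * (s + 2)) * \<bar>f' b\<bar>)"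
    using integral_abs_diff_endpoints_le_s_convex_deriv[OF assms(1-5)] \<open>c \<in> {a..b}\<close>
    by (intro add_mono) auto
  also have "\<dots> = 1 / ((s + 1) * (s + 2)) * ((c - a)\<^sup>2 * \<bar>f' a\<bar> + (b - c)\<^sup>2 * \<bar>f' b\<bar>)
      + 1 / (s + 2) * ((c - a)\<^sup>2 + (b - c)\<^sup>2) * \<bar>f' c\<bar>"
    by (simp add: divide_inverse algebra_simps)
  finally show ?thesis .
qed

section \<open>A Steffensen-type estimate\<close>

lemma integrable_on_continuous_mult_nonneg:
  fixes f g :: "real \<Rightarrow> real"
  assumes "continuous_on {a..b} f" "g integrable_on {a..b}" "\<And>t. t \<in> {a..b} \<Longrightarrow> 0 \<le> g t"
  shows "(\<lambda>t. f t * g t) integrable_on {a..b}"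
proof -
  have "f \<in> borel_measurable (lebesgue_on {a..b})"
    using assms(1) by (rule continuous_imp_measurable_on_sets_lebesgue) simp
  moreover have "bounded (f ` {a..b})"
    using compact_continuous_image[OF assms(1) compact_Icc] by (rule compact_imp_bounded)
  moreover have "g absolutely_integrable_on {a..b}"
    by (rule nonnegative_absolutely_integrable_1[OF assms(2)]) (use assms(3) in blast)
  ultimately have "(\<lambda>t. f t * g t) absolutely_integrable_on {a..b}"
    by (intro absolutely_integrable_bounded_measurable_product_real) simp_all
  then show ?thesis
    using absolutely_integrable_on_def by blast
qed

lemma steffensen_left_deviation_le:
  fixes f g :: "real \<Rightarrow> real"
  assumes cont: "continuous_on {a..b} f" and g: "g integrable_on {a..b}"
    and g01: "\<And>t. t \<in> {a..b} \<Longrightarrow> 0 \<le> g t \<and> g t \<le> 1"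
    and "a \<le> c" "c \<le> b" "integral {a..b} g = c - a"
  shows "\<bar>integral {a..c} f - integral {a..b} (\<lambda>t. f t * g t)\<bar> \<le> integral {a..b} (\<lambda>t. \<bar>f t - f c\<bar>)"
proof -
  \<comment> \<open>the deviation is the integral of \<open>f - f c\<close> against this weight, which has modulus at most 1\<close>
  let ?w = "\<lambda>t. (if t \<in> {a..c} then 1 else 0) - g t"
  have h1: "((\<lambda>t. if t \<in> {a..c} then f t - f c else 0) has_integral integral {a..c} f - f c * (c - a)) {a..b}"
  proof -
    have "f integrable_on {a..c}"
      by (rule integrable_continuous_interval[OF continuous_on_subset[OF cont]]) (use \<open>c \<le> b\<close> in auto)
    then have "((\<lambda>t. f t - f c) has_integral integral {a..c} f - f c * (c - a)) {a..c}"
      using has_integral_diff[OF integrable_integral has_integral_const_real[of "f c" a c]] \<open>a \<le> c\<close>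
      by (simp add: mult.commute)
    then show ?thesis
      using has_integral_restrict_closed_subinterval[of "\<lambda>t. f t - f c" _ a c a b] \<open>a \<le> c\<close> \<open>c \<le> b\<close>
      by (simp add: box_real)
  qed
  have h2: "((\<lambda>t. (f t - f c) * g t) has_integral integral {a..b} (\<lambda>t. f t * g t) - f c * (c - a)) {a..b}"
  proof -
    have "(\<lambda>t. f t * g t) integrable_on {a..b}"
      using integrable_on_continuous_mult_nonneg[OF cont g] g01 by blast
    from has_integral_diff[OF integrable_integral[OF this] has_integral_mult_right[OF integrable_integral[OF g], of "f c"]]
    show ?thesis
      using \<open>integral {a..b} g = c - a\<close> by (simp add: algebra_simps)
  qed
  have "((\<lambda>t. (if t \<in> {a..c} then f t - f c else 0) - (f t - f c) * g t) has_integral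
      integral {a..c} f - integral {a..b} (\<lambda>t. f t * g t)) {a..b}"
    using has_integral_diff[OF h1 h2] by simp
  moreover have "(\<lambda>t. (if t \<in> {a..c} then f t - f c else 0) - (f t - f c) * g t) = (\<lambda>t. (f t - f c) * ?w t)"
    by (simp add: fun_eq_iff algebra_simps)
  ultimately have w: "((\<lambda>t. (f t - f c) * ?w t) has_integral
      integral {a..c} f - integral {a..b} (\<lambda>t. f t * g t)) {a..b}"
    by simp
  have "norm (integral {a..b} (\<lambda>t. (f t - f c) * ?w t)) \<le> integral {a..b} (\<lambda>t. \<bar>f t - f c\<bar>)"
  proof (rule integral_norm_bound_integral)
    show "(\<lambda>t. (f t - f c) * ?w t) integrable_on {a..b}"
      using w by blast
    show "(\<lambda>t. \<bar>f t - f c\<bar>) integrable_on {a..b}"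
      using cont by (intro integrable_continuous_interval continuous_intros)
    show "norm ((f t - f c) * ?w t) \<le> \<bar>f t - f c\<bar>" if "t \<in> {a..b}" for t
      using g01[OF that] by (auto simp: abs_mult intro!: mult_left_le)
  qed
  then show ?thesis
    using integral_unique[OF w] by simp
qed

lemma steffensen_right_deviation_le:
  fixes f g :: "real \<Rightarrow> real"
  assumes cont: "continuous_on {a..b} f" and g: "g integrable_on {a..b}"
    and g01: "\<And>t. t \<in> {a..b} \<Longrightarrow> 0 \<le> g t \<and> g t \<le> 1"
    and "a \<le> c" "c \<le> b" "integral {a..b} g = b - c"
  shows "\<bar>integral {a..b} (\<lambda>t. f t * g t) - integral {c..b} f\<bar> \<le> integral {a..b} (\<lambda>t. \<bar>f t - f c\<bar>)"
proof -
  have f: "f integrable_on {a..b}" and fg: "(\<lambda>t. f t * g t) integrable_on {a..b}"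
    using integrable_continuous_interval[OF cont] integrable_on_continuous_mult_nonneg[OF cont g] g01 by auto
  have "(\<lambda>t. 1 - g t) integrable_on {a..b}"
    using g by (intro integrable_diff integrable_on_const) auto
  moreover have "integral {a..b} (\<lambda>t. 1 - g t) = c - a"
    using integral_diff[OF integrable_on_const g] \<open>integral {a..b} g = b - c\<close> \<open>a \<le> c\<close> \<open>c \<le> b\<close> by simp
  ultimately have "\<bar>integral {a..c} f - integral {a..b} (\<lambda>t. f t * (1 - g t))\<bar> \<le> integral {a..b} (\<lambda>t. \<bar>f t - f c\<bar>)"
    using steffensen_left_deviation_le[OF cont, of "\<lambda>t. 1 - g t" c] g01 \<open>a \<le> c\<close> \<open>c \<le> b\<close> by simp
  moreover have "integral {a..b} (\<lambda>t. f t * (1 - g t)) = integral {a..b} f - integral {a..b} (\<lambda>t. f t * g t)"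
    using integral_diff[OF f fg] by (simp add: right_diff_distrib)
  moreover have "integral {a..b} f = integral {a..c} f + integral {c..b} f"
    using Henstock_Kurzweil_Integration.integral_combine[OF \<open>a \<le> c\<close> \<open>c \<le> b\<close> f] by simp
  ultimately show ?thesis
    by (simp add: abs_minus_commute)
qed

theorem theorem2p2:
  fixes a b s :: real and f f' g :: "real \<Rightarrow> real"
  assumes "0 \<le> a" and "a < b"
    and "0 < s" and "s \<le> 1"
    and "f integrable_on {a..b}" and "g integrable_on {a..b}"
    and "\<And>t. t \<in> {a..b} \<Longrightarrow> 0 \<le> g t \<and> g t \<le> 1"
    and "(\<lambda>t. g t * f' t) integrable_on {a..b}"
    and "abs_continuous_on {a..b} f"
    and "AE x in lebesgue. x \<in> {a..b} \<longrightarrow> (f has_real_derivative f' x) (at x)"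
    and "s_convex_on s {a..b} (\<lambda>t. \<bar>f' t\<bar>)"
  defines "lam \<equiv> integral {a..b} g"
  shows "(\<bar>integral {a..a+lam} f - integral {a..b} (\<lambda>t. f t * g t)\<bar>
           \<le> 1 / ((s+1)*(s+2)) * (lam^2 * \<bar>f' a\<bar> + (b-a-lam)^2 * \<bar>f' b\<bar>)
             + 1 / (s+2) * (lam^2 + (b-a-lam)^2) * \<bar>f' (a+lam)\<bar>)
       \<and> (\<bar>integral {a..b} (\<lambda>t. f t * g t) - integral {b-lam..b} f\<bar>
           \<le> 1 / ((s+1)*(s+2)) * (lam^2 * \<bar>f' b\<bar> + (b-a-lam)^2 * \<bar>f' a\<bar>)
             + 1 / (s+2) * (lam^2 + (b-a-lam)^2) * \<bar>f' (b-lam)\<bar>)"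
proof -
  note g = \<open>g integrable_on {a..b}\<close> and g01 = \<open>\<And>t. t \<in> {a..b} \<Longrightarrow> 0 \<le> g t \<and> g t \<le> 1\<close>
  have cont: "continuous_on {a..b} f"
    using abs_continuous_on_imp_continuous_on[OF \<open>abs_continuous_on {a..b} f\<close>] by simp
  have "lam \<le> integral {a..b} (\<lambda>t. 1::real)"
    unfolding lam_def by (rule integral_le[OF g]) (use g01 in auto)
  moreover have "0 \<le> lam"
    unfolding lam_def by (rule integral_nonneg[OF g]) (use g01 in blast)
  ultimately have lam: "0 \<le> lam" "lam \<le> b - a"
    using \<open>a < b\<close> by simp_all
  note bound = integral_abs_diff_le_s_convex_deriv[OF \<open>a < b\<close> less_imp_le[OF \<open>0 < s\<close>]
    \<open>abs_continuous_on {a..b} f\<close> \<open>AE x in lebesgue. x \<in> {a..b} \<longrightarrow> (f has_real_derivative f' x) (at x)\<close>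
    \<open>s_convex_on s {a..b} (\<lambda>t. \<bar>f' t\<bar>)\<close>]
  have "\<bar>integral {a..a+lam} f - integral {a..b} (\<lambda>t. f t * g t)\<bar> \<le> integral {a..b} (\<lambda>t. \<bar>f t - f (a + lam)\<bar>)"
    using steffensen_left_deviation_le[OF cont g g01] lam unfolding lam_def by simp
  also have "\<dots> \<le> 1 / ((s+1)*(s+2)) * (lam^2 * \<bar>f' a\<bar> + (b-a-lam)^2 * \<bar>f' b\<bar>)
             + 1 / (s+2) * (lam^2 + (b-a-lam)^2) * \<bar>f' (a+lam)\<bar>"
    using bound[of "a + lam"] lam by (simp add: algebra_simps)
  moreover have "\<bar>integral {a..b} (\<lambda>t. f t * g t) - integral {b-lam..b} f\<bar> \<le> integral {a..b} (\<lambda>t. \<bar>f t - f (b - lam)\<bar>)"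
    using steffensen_right_deviation_le[OF cont g g01] lam unfolding lam_def by simp
  moreover have "\<dots> \<le> 1 / ((s+1)*(s+2)) * (lam^2 * \<bar>f' b\<bar> + (b-a-lam)^2 * \<bar>f' a\<bar>)
             + 1 / (s+2) * (lam^2 + (b-a-lam)^2) * \<bar>f' (b-lam)\<bar>"
    using bound[of "b - lam"] lam by (simp add: algebra_simps)
  ultimately show ?thesis
    by linarith
qed

end
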